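(* Let $R$ be a commutative ring and $S$ a multiplicative subset of $R$. Then $R$ has $u$-$S$-Noetherian spectrum if and only if the polynomial ring $R[X]$ has $u$-$S$-Noetherian spectrum (where $S$ is regarded as a multiplicative subset of $R[X]$ via $R\subseteq R[X]$).
   Context: A ring $A$ with multiplicative subset $S$ has uniformly $S$-Noetherian ($u$-$S$-Noetherian) spectrum if there exists a single $s\in S$ such that for every ideal $I$ of $A$ there is a finitely generated ideal $J\subseteq I$ with $sI\subseteq\sqrt{J}$ (so $sI\subseteq\sqrt J\subseteq\sqrt I$). *)

theory Defs
  imports "HOL-Computational_Algebra.Polynomial"
begin

definition is_ideal :: "'a::comm_ring_1 set \<Rightarrow> bool" where
  "is_ideal I \<longleftrightarrow> 0 \<in> I \<and> (\<forall>x\<in>I. \<forall>y\<in>I. x + y \<in> I) \<and> (\<forall>r x. x \<in> I \<longrightarrow> r * x \<in> I)"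

definition ideal_gen :: "'a::comm_ring_1 set \<Rightarrow> 'a set" where
  "ideal_gen F = \<Inter>{I. is_ideal I \<and> F \<subseteq> I}"

definition fin_gen_ideal :: "'a::comm_ring_1 set \<Rightarrow> bool" where
  "fin_gen_ideal J \<longleftrightarrow> (\<exists>F. finite F \<and> J = ideal_gen F)"

definition radical :: "'a::comm_ring_1 set \<Rightarrow> 'a set" where
  "radical J = {x. \<exists>n::nat. x ^ n \<in> J}"

definition mult_subset :: "'a::comm_ring_1 set \<Rightarrow> bool" where
  "mult_subset S \<longleftrightarrow> 1 \<in> S \<and> (\<forall>s\<in>S. \<forall>t\<in>S. s * t \<in> S)"

definition u_S_noetherian_spectrum :: "'a::comm_ring_1 set \<Rightarrow> bool" where
  "u_S_noetherian_spectrum S \<longleftrightarrow>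
     (\<exists>s\<in>S. \<forall>I. is_ideal I \<longrightarrow>
        (\<exists>J. fin_gen_ideal J \<and> J \<subseteq> I \<and> (\<lambda>x. s * x) ` I \<subseteq> radical J))"

end

theory Submission
  imports Defs
begin

text \<open>
  The same element serves on both sides: \<open>s\<close> for \<open>R\<close> and the constant \<open>[:s:]\<close> for \<open>R[X]\<close>.
  Going down, apply the hypothesis to \<open>I[X]\<close> and take constant terms of the generators.
  Going up, by Zorn's lemma it suffices to handle an ideal \<open>Q\<close> of \<open>R[X]\<close> all of whose proper
  overideals are \<open>[:s:]\<close>-radically finite; its contraction \<open>P = Q \<inter> R\<close> is \<open>s\<close>-radically finite.
  If \<open>Q\<close> contains the leading coefficients of its elements, then \<open>Q = P[X]\<close> and the
  generators of \<open>P\<close> suffice. Otherwise let \<open>f \<in> Q\<close> have least degree among the elements whose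
  leading coefficient \<open>a\<close> is not in \<open>Q\<close>. Reducing leading terms against \<open>f\<close> gives
  \<open>a\<^sup>k h \<in> P[X] + (f)\<close> for every \<open>h \<in> Q\<close>, while \<open>Q + (a)\<close> is \<open>[:s:]\<close>-radically finite
  by maximality. So for \<open>y = s h\<close> and a suitable finitely generated \<open>J \<subseteq> Q\<close> we get
  \<open>y\<^sup>m \<in> J + (a)\<close> and \<open>a\<^sup>k y\<close> in the radical of \<open>J\<close>, which puts \<open>y\<close> itself in that radical.
\<close>

lemma is_idealI:
  assumes "0 \<in> I" "\<And>x y. x \<in> I \<Longrightarrow> y \<in> I \<Longrightarrow> x + y \<in> I" "\<And>r x. x \<in> I \<Longrightarrow> r * x \<in> I"
  shows "is_ideal I"
  using assms unfolding is_ideal_def by blast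

lemma ideal_zero: "is_ideal I \<Longrightarrow> 0 \<in> I"
  unfolding is_ideal_def by blast

lemma ideal_add: "is_ideal I \<Longrightarrow> x \<in> I \<Longrightarrow> y \<in> I \<Longrightarrow> x + y \<in> I"
  unfolding is_ideal_def by blast

lemma ideal_mult_left: "is_ideal I \<Longrightarrow> x \<in> I \<Longrightarrow> r * x \<in> I"
  unfolding is_ideal_def by blast

lemma ideal_mult_right: "is_ideal I \<Longrightarrow> x \<in> I \<Longrightarrow> x * r \<in> I"
  using ideal_mult_left[of I x r] by (simp add: mult.commute)

lemma ideal_diff: "is_ideal I \<Longrightarrow> x \<in> I \<Longrightarrow> y \<in> I \<Longrightarrow> x - y \<in> I"
  using ideal_add[of I x "(-1) * y"] ideal_mult_left[of I y "-1"] by simp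

lemma ideal_sum: "is_ideal I \<Longrightarrow> (\<And>i. i \<in> A \<Longrightarrow> f i \<in> I) \<Longrightarrow> sum f A \<in> I"
  by (induction A rule: infinite_finite_induct) (simp_all add: ideal_zero ideal_add)

lemma ideal_power_diff:
  assumes J: "is_ideal J" and "x - y \<in> J"
  shows "x ^ n - y ^ n \<in> J"
proof (induction n)
  case 0
  show ?case using ideal_zero[OF J] by simp
next
  case (Suc n)
  have "x ^ Suc n - y ^ Suc n = x * (x ^ n - y ^ n) + y ^ n * (x - y)"
    by (simp add: algebra_simps)
  also have "\<dots> \<in> J"
    using Suc.IH \<open>x - y \<in> J\<close> by (intro ideal_add[OF J] ideal_mult_left[OF J])
  finally show ?case .
qed

lemma is_ideal_ideal_gen: "is_ideal (ideal_gen F)"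
  unfolding ideal_gen_def is_ideal_def by auto

lemma ideal_gen_subset: "F \<subseteq> ideal_gen F"
  unfolding ideal_gen_def by auto

lemma ideal_gen_minimal: "is_ideal I \<Longrightarrow> F \<subseteq> I \<Longrightarrow> ideal_gen F \<subseteq> I"
  unfolding ideal_gen_def by auto

lemma is_ideal_Union_chain:
  assumes "\<C> \<noteq> {}" "subset.chain \<A> \<C>" "\<And>X. X \<in> \<C> \<Longrightarrow> is_ideal X"
  shows "is_ideal (\<Union>\<C>)"
proof (rule is_idealI)
  show "0 \<in> \<Union>\<C>" using assms(1,3) ideal_zero by blast
  show "x + y \<in> \<Union>\<C>" if xy: "x \<in> \<Union>\<C>" "y \<in> \<Union>\<C>" for x y
  proof -
    obtain X Y where XY: "X \<in> \<C>" "Y \<in> \<C>" "x \<in> X" "y \<in> Y" using xy by blast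
    moreover have "X \<subseteq> Y \<or> Y \<subseteq> X" using XY assms(2) unfolding subset_chain_def by blast
    ultimately have "X \<union> Y \<in> \<C>" "x \<in> X \<union> Y" "y \<in> X \<union> Y"
      by (auto simp: sup.absorb1 sup.absorb2)
    then show ?thesis using ideal_add[OF assms(3)] by blast
  qed
  show "r * x \<in> \<Union>\<C>" if x: "x \<in> \<Union>\<C>" for r x
  proof -
    obtain X where "X \<in> \<C>" "x \<in> X" using x by blast
    then show ?thesis using ideal_mult_left[OF assms(3)] by blast
  qed
qed

lemma binomial_power_mem_ideal:
  fixes x y :: "'a::comm_ring_1"
  assumes I: "is_ideal I" and x: "x ^ m \<in> I" and y: "y ^ n \<in> I"
  shows "(x + y) ^ (m + n) \<in> I"
proof -
  have pow: "z ^ k \<in> I" if "z ^ l \<in> I" "l \<le> k" for z :: 'a and k l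
    using ideal_mult_left[OF I that(1), of "z ^ (k - l)"] that(2) by (simp add: power_add[symmetric])
  have "(x + y) ^ (m + n) = (\<Sum>k\<le>m+n. of_nat ((m+n) choose k) * x ^ k * y ^ (m + n - k))"
    by (rule binomial_ring)
  also have "\<dots> \<in> I"
  proof (rule ideal_sum[OF I])
    fix k
    show "of_nat ((m+n) choose k) * x ^ k * y ^ (m + n - k) \<in> I"
    proof (cases "m \<le> k")
      case True
      then have "x ^ k \<in> I" by (intro pow[OF x])
      then show ?thesis by (intro ideal_mult_right[OF I] ideal_mult_left[OF I])
    next
      case False
      then have "y ^ (m + n - k) \<in> I" by (intro pow[OF y]) simp
      then show ?thesis by (rule ideal_mult_left[OF I])
    qed
  qed
  finally show ?thesis .
qed

lemma is_ideal_radical: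
  assumes J: "is_ideal J"
  shows "is_ideal (radical J)"
proof (rule is_idealI)
  show "0 \<in> radical J"
    using ideal_zero[OF J] unfolding radical_def by (auto intro: exI[of _ 1])
  show "x + y \<in> radical J" if "x \<in> radical J" "y \<in> radical J" for x y
    using that binomial_power_mem_ideal[OF J] unfolding radical_def by blast
  show "r * x \<in> radical J" if x: "x \<in> radical J" for r x
  proof -
    obtain n where "x ^ n \<in> J" using x unfolding radical_def by blast
    then have "(r * x) ^ n \<in> J" unfolding power_mult_distrib by (rule ideal_mult_left[OF J])
    then show ?thesis unfolding radical_def by blast
  qed
qed

lemma radical_subset: "J \<subseteq> radical J"
  unfolding radical_def by (auto intro: exI[of _ 1])

lemma radical_mono: "J \<subseteq> K \<Longrightarrow> radical J \<subseteq> radical K"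
  unfolding radical_def by auto

lemma radical_power_mem: "x ^ n \<in> radical J \<Longrightarrow> x \<in> radical J"
  unfolding radical_def by (auto simp flip: power_mult)

lemma
  fixes \<phi> :: "'a::comm_ring_1 \<Rightarrow> 'b::comm_ring_1"
  assumes add: "\<And>x y. \<phi> (x + y) = \<phi> x + \<phi> y" and mult: "\<And>x y. \<phi> (x * y) = \<phi> x * \<phi> y"
  shows is_ideal_vimage_hom: "is_ideal K \<Longrightarrow> is_ideal (\<phi> -` K)"
    and hom_mem_radical_ideal_gen:
      "\<phi> 1 = 1 \<Longrightarrow> x \<in> radical (ideal_gen F) \<Longrightarrow> \<phi> x \<in> radical (ideal_gen (\<phi> ` F))"
proof -
  have zero: "\<phi> 0 = 0" using add[of 0 0] by simp
  show vimage: "is_ideal (\<phi> -` K)" if "is_ideal K" for K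
    using that by (intro is_idealI) (simp_all add: zero add mult ideal_zero ideal_add ideal_mult_left)
  assume one: "\<phi> 1 = 1" and "x \<in> radical (ideal_gen F)"
  then obtain n where "x ^ n \<in> ideal_gen F" unfolding radical_def by blast
  moreover have "ideal_gen F \<subseteq> \<phi> -` ideal_gen (\<phi> ` F)"
    using ideal_gen_subset by (intro ideal_gen_minimal vimage is_ideal_ideal_gen) blast
  ultimately have "\<phi> (x ^ n) \<in> ideal_gen (\<phi> ` F)" by blast
  moreover have "\<phi> (x ^ n) = \<phi> x ^ n" by (induction n) (simp_all add: one mult)
  ultimately show "\<phi> x \<in> radical (ideal_gen (\<phi> ` F))" unfolding radical_def by auto
qed

definition plus_principal :: "'a::comm_ring_1 set \<Rightarrow> 'a \<Rightarrow> 'a set" where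
  "plus_principal I a = {x + a * r | x r. x \<in> I}"

lemma is_ideal_plus_principal:
  assumes I: "is_ideal I"
  shows "is_ideal (plus_principal I a)"
proof (rule is_idealI)
  show "0 \<in> plus_principal I a"
    unfolding plus_principal_def using ideal_zero[OF I] by (auto intro!: exI[of _ 0])
  show "x + y \<in> plus_principal I a" if xy: "x \<in> plus_principal I a" "y \<in> plus_principal I a" for x y
  proof -
    obtain x1 r1 x2 r2 where "x = x1 + a * r1" "y = x2 + a * r2" "x1 \<in> I" "x2 \<in> I"
      using xy unfolding plus_principal_def by blast
    then have "x + y = (x1 + x2) + a * (r1 + r2)" "x1 + x2 \<in> I"
      by (simp_all add: algebra_simps ideal_add[OF I])
    then show ?thesis unfolding plus_principal_def by blast
  qed
  show "z * x \<in> plus_principal I a" if x: "x \<in> plus_principal I a" for z x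
  proof -
    obtain x1 r1 where x1: "x = x1 + a * r1" "x1 \<in> I" using x unfolding plus_principal_def by blast
    have "z * x = z * x1 + a * (z * r1)" using x1(1) by (simp add: algebra_simps)
    moreover have "z * x1 \<in> I" using x1(2) by (rule ideal_mult_left[OF I])
    ultimately show ?thesis unfolding plus_principal_def by blast
  qed
qed

lemma subset_plus_principal: "I \<subseteq> plus_principal I a"
  unfolding plus_principal_def by (force intro: exI[of _ 0])

lemma principal_mem_plus_principal: "is_ideal I \<Longrightarrow> a \<in> plus_principal I a"
  unfolding plus_principal_def using ideal_zero by (force intro: exI[of _ 1])

lemma plus_principal_mono: "I \<subseteq> J \<Longrightarrow> plus_principal I a \<subseteq> plus_principal J a"
  unfolding plus_principal_def by blast

lemma radical_plus_principal_cancel: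
  assumes J: "is_ideal J" and y: "y ^ m \<in> plus_principal J a" and ay: "a ^ k * y \<in> radical J"
  shows "y \<in> radical J"
proof -
  obtain j r where jr: "y ^ m = j + a * r" "j \<in> J" using y unfolding plus_principal_def by blast
  then have "(y ^ m) ^ k - (a * r) ^ k \<in> J" by (intro ideal_power_diff[OF J]) simp
  then have "((y ^ m) ^ k - (a * r) ^ k) * y \<in> radical J"
    using radical_subset ideal_mult_right[OF J] by blast
  moreover have "r ^ k * (a ^ k * y) \<in> radical J"
    using ideal_mult_left[OF is_ideal_radical[OF J] ay] .
  moreover have "y ^ (m * k + 1) = ((y ^ m) ^ k - (a * r) ^ k) * y + r ^ k * (a ^ k * y)"
    by (simp add: algebra_simps power_mult_distrib flip: power_mult)
  ultimately have "y ^ (m * k + 1) \<in> radical J"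
    using ideal_add[OF is_ideal_radical[OF J]] by simp
  then show ?thesis by (rule radical_power_mem)
qed

lemma finite_generators_plus_principal:
  assumes "finite G" "G \<subseteq> plus_principal I a"
  obtains F where "finite F" "F \<subseteq> I" "ideal_gen G \<subseteq> plus_principal (ideal_gen F) a"
proof -
  have "\<forall>g\<in>G. \<exists>x. x \<in> I \<and> (\<exists>r. g = x + a * r)"
    using assms(2) unfolding plus_principal_def by blast
  then obtain q where q: "\<forall>g\<in>G. q g \<in> I \<and> (\<exists>r. g = q g + a * r)"
    by (rule bchoice[THEN exE])
  have "G \<subseteq> plus_principal (ideal_gen (q ` G)) a"
  proof
    fix g assume g: "g \<in> G"
    then obtain r where "g = q g + a * r" using q by blast
    moreover have "q g \<in> ideal_gen (q ` G)" using g ideal_gen_subset by blast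
    ultimately show "g \<in> plus_principal (ideal_gen (q ` G)) a" unfolding plus_principal_def by blast
  qed
  then have "ideal_gen G \<subseteq> plus_principal (ideal_gen (q ` G)) a"
    by (intro ideal_gen_minimal is_ideal_plus_principal is_ideal_ideal_gen)
  moreover have "finite (q ` G)" "q ` G \<subseteq> I" using assms(1) q by auto
  ultimately show ?thesis using that by blast
qed

section \<open>Ideals of \<open>R[X]\<close>\<close>

definition const_part :: "'a::comm_ring_1 poly set \<Rightarrow> 'a set" where
  "const_part Q = {c. [:c:] \<in> Q}"

definition poly_extension :: "'a::comm_ring_1 set \<Rightarrow> 'a poly set" where
  "poly_extension I = {p. \<forall>i. coeff p i \<in> I}"

lemma is_ideal_const_part: "is_ideal Q \<Longrightarrow> is_ideal (const_part Q)"
  unfolding const_part_def using is_ideal_vimage_hom[of "\<lambda>c. [:c:]" Q] by (simp add: vimage_def)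

lemma const_poly_mem_radical_ideal_gen:
  "c \<in> radical (ideal_gen G) \<Longrightarrow> [:c:] \<in> radical (ideal_gen ((\<lambda>c. [:c:]) ` G))"
  by (rule hom_mem_radical_ideal_gen[of "\<lambda>c. [:c:]"]) simp_all

lemma coeff_0_mem_radical_ideal_gen:
  "p \<in> radical (ideal_gen F) \<Longrightarrow> coeff p 0 \<in> radical (ideal_gen ((\<lambda>p. coeff p 0) ` F))"
  by (rule hom_mem_radical_ideal_gen[of "\<lambda>p. coeff p 0"]) (simp_all add: coeff_mult_0)

lemma is_ideal_poly_extension:
  assumes I: "is_ideal I"
  shows "is_ideal (poly_extension I)"
proof (rule is_idealI)
  show "0 \<in> poly_extension I" unfolding poly_extension_def using ideal_zero[OF I] by simp
  show "x + y \<in> poly_extension I" if "x \<in> poly_extension I" "y \<in> poly_extension I" for x y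
    using that ideal_add[OF I] unfolding poly_extension_def by simp
  show "r * x \<in> poly_extension I" if x: "x \<in> poly_extension I" for r x
  proof -
    have "coeff (r * x) i \<in> I" for i
      unfolding coeff_mult using x by (intro ideal_sum[OF I] ideal_mult_left[OF I]) (simp add: poly_extension_def)
    then show ?thesis by (simp add: poly_extension_def)
  qed
qed

lemma monom_mem_poly_extension: "is_ideal I \<Longrightarrow> b \<in> I \<Longrightarrow> monom b n \<in> poly_extension I"
  unfolding poly_extension_def by (simp add: ideal_zero)

lemma poly_mem_ideal_of_const_coeffs:
  assumes K: "is_ideal K" and coeffs: "\<And>i. [:coeff p i:] \<in> K"
  shows "p \<in> K"
proof -
  have "p = (\<Sum>i\<le>degree p. [:coeff p i:] * monom 1 i)"
    by (simp add: smult_monom poly_as_sum_of_monoms)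
  also have "\<dots> \<in> K" using coeffs by (intro ideal_sum[OF K] ideal_mult_right[OF K])
  finally show ?thesis .
qed

lemma poly_extension_const_part_subset: "is_ideal Q \<Longrightarrow> poly_extension (const_part Q) \<subseteq> Q"
  unfolding poly_extension_def const_part_def using poly_mem_ideal_of_const_coeffs by blast

lemma coeff_diff_monom_top:
  assumes "\<forall>i\<ge>Suc n. coeff h i = 0" "n \<le> i"
  shows "coeff (h - monom (coeff h n) n) i = 0"
  using assms by (cases "i = n") auto

lemma monom_mem_poly_extension_const_part:
  "is_ideal Q \<Longrightarrow> [:b:] \<in> Q \<Longrightarrow> monom b n \<in> poly_extension (const_part Q)"
  by (intro monom_mem_poly_extension is_ideal_const_part) (simp_all add: const_part_def)

lemma degree_eq_of_top_coeff:
  assumes "\<forall>i\<ge>Suc n. coeff h i = 0" "coeff h n \<noteq> 0"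
  shows "degree h = n"
  using assms by (intro antisym degree_le le_degree) auto

lemma poly_induct_coeff_bound [case_names zero step]:
  assumes zero: "P 0"
    and step: "\<And>n h. (\<And>h'. \<forall>i\<ge>n. coeff h' i = 0 \<Longrightarrow> P h') \<Longrightarrow> \<forall>i\<ge>Suc n. coeff h i = 0 \<Longrightarrow> P h"
  shows "P h"
proof -
  have "\<forall>i\<ge>n. coeff h i = 0 \<Longrightarrow> P h" for n h
  proof (induction n arbitrary: h)
    case 0
    then have "h = 0" by (simp add: poly_eq_iff)
    then show ?case using zero by simp
  qed (rule step)
  then show ?thesis using coeff_eq_0[of h] by (metis Suc_le_lessD)
qed

lemma mem_poly_extension_const_part:
  fixes Q :: "'a::comm_ring_1 poly set"
  assumes Q: "is_ideal Q" and lead: "\<And>g. g \<in> Q \<Longrightarrow> [:lead_coeff g:] \<in> Q"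
  shows "h \<in> Q \<Longrightarrow> h \<in> poly_extension (const_part Q)"
proof (induction h rule: poly_induct_coeff_bound)
  case zero
  show ?case using ideal_zero[OF is_ideal_poly_extension[OF is_ideal_const_part[OF Q]]] .
next
  case (step n h)
  let ?E = "poly_extension (const_part Q)"
  define b where "b = coeff h n"
  have "[:b:] \<in> Q"
  proof (cases "b = 0")
    case False
    then have "degree h = n" using step.hyps degree_eq_of_top_coeff unfolding b_def by blast
    then show ?thesis using lead[OF step.prems] unfolding b_def by simp
  qed (simp add: ideal_zero[OF Q])
  then have bE: "monom b n \<in> ?E" by (rule monom_mem_poly_extension_const_part[OF Q])
  then have "h - monom b n \<in> Q"
    using step.prems poly_extension_const_part_subset[OF Q] ideal_diff[OF Q] by blast
  then have "h - monom b n \<in> ?E"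
    using step.IH coeff_diff_monom_top[OF step.hyps] unfolding b_def by blast
  then have "(h - monom b n) + monom b n \<in> ?E"
    using bE by (rule ideal_add[OF is_ideal_poly_extension[OF is_ideal_const_part[OF Q]]])
  then show ?case by simp
qed

lemma power_lead_coeff_mult_mem_plus_principal:
  fixes Q :: "'a::comm_ring_1 poly set"
  assumes Q: "is_ideal Q" and f: "f \<in> Q" "[:lead_coeff f:] \<notin> Q"
    and min: "\<And>g. g \<in> Q \<Longrightarrow> [:lead_coeff g:] \<notin> Q \<Longrightarrow> degree f \<le> degree g"
  shows "h \<in> Q \<Longrightarrow> \<exists>k. [:lead_coeff f:] ^ k * h \<in> plus_principal (poly_extension (const_part Q)) f"
proof (induction h rule: poly_induct_coeff_bound)
  let ?a = "[:lead_coeff f:]" and ?E = "plus_principal (poly_extension (const_part Q)) f"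
  have E: "is_ideal ?E" by (intro is_ideal_plus_principal is_ideal_poly_extension is_ideal_const_part Q)
  {
    case zero
    show ?case using ideal_zero[OF E] by auto
  next
    case (step n h)
    define b where "b = coeff h n"
    show ?case
    proof (cases "[:b:] \<in> Q")
      case True
      then have bE: "monom b n \<in> poly_extension (const_part Q)"
        by (rule monom_mem_poly_extension_const_part[OF Q])
      then have "h - monom b n \<in> Q"
        using step.prems poly_extension_const_part_subset[OF Q] ideal_diff[OF Q] by blast
      then obtain k where "?a ^ k * (h - monom b n) \<in> ?E"
        using step.IH coeff_diff_monom_top[OF step.hyps] unfolding b_def by blast
      moreover have "?a ^ k * monom b n \<in> ?E"
        using bE subset_plus_principal by (intro ideal_mult_left[OF E]) blast
      ultimately have "?a ^ k * (h - monom b n) + ?a ^ k * monom b n \<in> ?E"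
        by (rule ideal_add[OF E])
      then show ?thesis by (auto simp: algebra_simps)
    next
      case False
      then have "b \<noteq> 0" using ideal_zero[OF Q] by auto
      then have deg: "degree h = n" using step.hyps degree_eq_of_top_coeff unfolding b_def by blast
      then have d: "degree f \<le> n" using min[OF step.prems] False unfolding b_def by simp
      define h1 where "h1 = ?a * h - monom b (n - degree f) * f"
      have "h1 \<in> Q" unfolding h1_def
        using step.prems f(1) by (intro ideal_diff[OF Q] ideal_mult_left[OF Q])
      moreover have "\<forall>i\<ge>n. coeff h1 i = 0"
      proof (intro allI impI)
        fix i assume "n \<le> i"
        show "coeff h1 i = 0"
        proof (cases "i = n")
          case True
          then show ?thesis using d deg unfolding h1_def b_def by (simp add: coeff_monom_mult)
        next
          case False
          then have "degree h < i" "degree f < i - (n - degree f)" using \<open>n \<le> i\<close> d deg by auto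
          then show ?thesis unfolding h1_def by (simp add: coeff_monom_mult coeff_eq_0)
        qed
      qed
      ultimately obtain k where "?a ^ k * h1 \<in> ?E" using step.IH by blast
      moreover have "?a ^ k * monom b (n - degree f) * f \<in> ?E"
        using principal_mem_plus_principal[OF is_ideal_poly_extension[OF is_ideal_const_part[OF Q]]]
        by (rule ideal_mult_left[OF E])
      ultimately have "?a ^ k * h1 + ?a ^ k * monom b (n - degree f) * f \<in> ?E"
        by (rule ideal_add[OF E])
      then have "?a ^ Suc k * h \<in> ?E" by (simp add: h1_def algebra_simps)
      then show ?thesis by blast
    qed
  }
qed

lemma const_mult_mem_radical_poly_extension:
  fixes P G :: "'a::comm_ring_1 set"
  assumes P: "(\<lambda>x. s * x) ` P \<subseteq> radical (ideal_gen G)" and h: "h \<in> poly_extension P"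
  shows "[:s:] * h \<in> radical (ideal_gen ((\<lambda>c. [:c:]) ` G))"
proof (rule poly_mem_ideal_of_const_coeffs[OF is_ideal_radical[OF is_ideal_ideal_gen]])
  fix i
  have "s * coeff h i \<in> radical (ideal_gen G)" using P h unfolding poly_extension_def by blast
  then have "[:s * coeff h i:] \<in> radical (ideal_gen ((\<lambda>c. [:c:]) ` G))"
    by (rule const_poly_mem_radical_ideal_gen)
  then show "[:coeff ([:s:] * h) i:] \<in> radical (ideal_gen ((\<lambda>c. [:c:]) ` G))" by simp
qed

lemma power_lead_coeff_mult_mem_radical:
  fixes Q :: "'a::comm_ring_1 poly set"
  assumes Q: "is_ideal Q" and f: "f \<in> Q" "[:lead_coeff f:] \<notin> Q"
    and min: "\<And>g. g \<in> Q \<Longrightarrow> [:lead_coeff g:] \<notin> Q \<Longrightarrow> degree f \<le> degree g"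
    and P: "(\<lambda>x. s * x) ` const_part Q \<subseteq> radical (ideal_gen G)" and h: "h \<in> Q"
  shows "\<exists>k. [:lead_coeff f:] ^ k * ([:s:] * h) \<in> radical (ideal_gen (insert f ((\<lambda>c. [:c:]) ` G)))"
proof -
  let ?J = "ideal_gen (insert f ((\<lambda>c. [:c:]) ` G))"
  have J: "is_ideal ?J" by (rule is_ideal_ideal_gen)
  obtain k p r where kpr: "[:lead_coeff f:] ^ k * h = p + f * r" "p \<in> poly_extension (const_part Q)"
    using power_lead_coeff_mult_mem_plus_principal[OF Q f min h] unfolding plus_principal_def by blast
  have gens: "insert f ((\<lambda>c. [:c:]) ` G) \<subseteq> ?J" by (rule ideal_gen_subset)
  then have "ideal_gen ((\<lambda>c. [:c:]) ` G) \<subseteq> ?J" by (intro ideal_gen_minimal[OF J]) blast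
  then have "radical (ideal_gen ((\<lambda>c. [:c:]) ` G)) \<subseteq> radical ?J" by (rule radical_mono)
  then have "[:s:] * p \<in> radical ?J" using const_mult_mem_radical_poly_extension[OF P kpr(2)] by blast
  moreover have "f \<in> ?J" using gens by blast
  then have "[:s:] * (f * r) \<in> ?J" by (intro ideal_mult_left[OF J] ideal_mult_right[OF J])
  then have "[:s:] * (f * r) \<in> radical ?J" by (rule subsetD[OF radical_subset])
  ultimately have "[:s:] * p + [:s:] * (f * r) \<in> radical ?J"
    by (rule ideal_add[OF is_ideal_radical[OF J]])
  moreover have "[:lead_coeff f:] ^ k * ([:s:] * h) = [:s:] * p + [:s:] * (f * r)"
    by (simp add: mult.left_commute[of _ "[:s:]"] kpr(1) smult_add_right)
  ultimately have "[:lead_coeff f:] ^ k * ([:s:] * h) \<in> radical ?J" by (simp only:)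
  then show ?thesis by blast
qed

section \<open>Radically finite ideals\<close>

definition s_radically_finite :: "'a::comm_ring_1 \<Rightarrow> 'a set \<Rightarrow> bool" where
  "s_radically_finite s I \<longleftrightarrow> (\<exists>J. fin_gen_ideal J \<and> J \<subseteq> I \<and> (\<lambda>x. s * x) ` I \<subseteq> radical J)"

lemma u_S_noetherian_spectrum_iff:
  "u_S_noetherian_spectrum S \<longleftrightarrow> (\<exists>s\<in>S. \<forall>I. is_ideal I \<longrightarrow> s_radically_finite s I)"
  unfolding u_S_noetherian_spectrum_def s_radically_finite_def ..

lemma s_radically_finiteI:
  assumes "is_ideal I" "finite F" "F \<subseteq> I" "(\<lambda>x. s * x) ` I \<subseteq> radical (ideal_gen F)"
  shows "s_radically_finite s I"
proof -
  have "fin_gen_ideal (ideal_gen F)" unfolding fin_gen_ideal_def using assms(2) by blast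
  moreover have "ideal_gen F \<subseteq> I" using assms(1,3) by (rule ideal_gen_minimal)
  ultimately show ?thesis unfolding s_radically_finite_def using assms(4) by blast
qed

lemma s_radically_finiteE:
  assumes "s_radically_finite s I"
  obtains F where "finite F" "F \<subseteq> I" "(\<lambda>x. s * x) ` I \<subseteq> radical (ideal_gen F)"
proof -
  obtain J where J: "fin_gen_ideal J" "J \<subseteq> I" "(\<lambda>x. s * x) ` I \<subseteq> radical J"
    using assms unfolding s_radically_finite_def by blast
  obtain F where F: "finite F" "J = ideal_gen F" using J(1) unfolding fin_gen_ideal_def by blast
  show ?thesis
  proof (rule that)
    show "finite F" by (rule F(1))
    show "F \<subseteq> I" using ideal_gen_subset[of F] F(2) J(2) by blast
    show "(\<lambda>x. s * x) ` I \<subseteq> radical (ideal_gen F)" using J(3) F(2) by simp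
  qed
qed

lemma s_radically_finite_Union_chain:
  assumes "\<C> \<noteq> {}" "subset.chain \<A> \<C>" "\<And>X. X \<in> \<C> \<Longrightarrow> is_ideal X"
    and "s_radically_finite s (\<Union>\<C>)"
  shows "\<exists>B\<in>\<C>. s_radically_finite s B"
proof -
  obtain F where F: "finite F" "F \<subseteq> \<Union>\<C>" "(\<lambda>x. s * x) ` \<Union>\<C> \<subseteq> radical (ideal_gen F)"
    using assms(4) by (rule s_radically_finiteE)
  obtain B where B: "B \<in> \<C>" "F \<subseteq> B"
    using finite_subset_Union_chain[OF F(1,2) assms(1,2)] by blast
  have "(\<lambda>x. s * x) ` B \<subseteq> radical (ideal_gen F)" using F(3) B(1) by blast
  then show ?thesis using B(1) s_radically_finiteI[OF assms(3)[OF B(1)] F(1) B(2)] by blast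
qed

lemma s_radically_finite_Zorn_induct:
  assumes step: "\<And>I. is_ideal I \<Longrightarrow> (\<And>I'. is_ideal I' \<Longrightarrow> I \<subset> I' \<Longrightarrow> s_radically_finite s I') \<Longrightarrow>
      s_radically_finite s I"
    and I: "is_ideal I"
  shows "s_radically_finite s I"
proof (rule ccontr)
  define \<A> where "\<A> = {I. is_ideal I \<and> \<not> s_radically_finite s I}"
  assume "\<not> s_radically_finite s I"
  then have "\<A> \<noteq> {}" using I unfolding \<A>_def by blast
  moreover have "\<Union>\<C> \<in> \<A>" if \<C>: "\<C> \<noteq> {}" "subset.chain \<A> \<C>" for \<C>
  proof -
    have members: "is_ideal X" "\<not> s_radically_finite s X" if "X \<in> \<C>" for X
      using \<C>(2) that unfolding subset_chain_def \<A>_def by blast+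
    have "\<not> s_radically_finite s (\<Union>\<C>)"
    proof
      assume "s_radically_finite s (\<Union>\<C>)"
      then show False using s_radically_finite_Union_chain[OF \<C> members(1)] members(2) by blast
    qed
    then show ?thesis unfolding \<A>_def using is_ideal_Union_chain[OF \<C> members(1)] by blast
  qed
  ultimately obtain M where M: "M \<in> \<A>" and max: "\<And>X. X \<in> \<A> \<Longrightarrow> M \<subseteq> X \<Longrightarrow> X = M"
    using subset_Zorn_nonempty[of \<A>] by blast
  have "s_radically_finite s I'" if "is_ideal I'" "M \<subset> I'" for I'
    using that max[of I'] unfolding \<A>_def by blast
  then have "s_radically_finite s M" using M step unfolding \<A>_def by blast
  then show False using M unfolding \<A>_def by blast
qed

section \<open>Transfer between \<open>R\<close> and \<open>R[X]\<close>\<close>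

lemma s_radically_finite_poly_if_lead_coeffs_mem:
  fixes Q :: "'a::comm_ring_1 poly set"
  assumes Q: "is_ideal Q" and lead: "\<And>g. g \<in> Q \<Longrightarrow> [:lead_coeff g:] \<in> Q"
    and P: "s_radically_finite s (const_part Q)"
  shows "s_radically_finite [:s:] Q"
proof -
  obtain G where G: "finite G" "G \<subseteq> const_part Q" "(\<lambda>x. s * x) ` const_part Q \<subseteq> radical (ideal_gen G)"
    using P by (rule s_radically_finiteE)
  show ?thesis
  proof (rule s_radically_finiteI[OF Q])
    show "finite ((\<lambda>c. [:c:]) ` G)" using G(1) by simp
    show "(\<lambda>c. [:c:]) ` G \<subseteq> Q" using G(2) unfolding const_part_def by blast
    show "(\<lambda>x. [:s:] * x) ` Q \<subseteq> radical (ideal_gen ((\<lambda>c. [:c:]) ` G))"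
    proof (rule image_subsetI)
      fix h assume "h \<in> Q"
      then have "h \<in> poly_extension (const_part Q)" using mem_poly_extension_const_part[OF Q lead] by blast
      then show "[:s:] * h \<in> radical (ideal_gen ((\<lambda>c. [:c:]) ` G))"
        by (rule const_mult_mem_radical_poly_extension[OF G(3)])
    qed
  qed
qed

lemma s_radically_finite_poly_if_min_lead_coeff:
  fixes Q :: "'a::comm_ring_1 poly set"
  assumes Q: "is_ideal Q" and f: "f \<in> Q" "[:lead_coeff f:] \<notin> Q"
    and min: "\<And>g. g \<in> Q \<Longrightarrow> [:lead_coeff g:] \<notin> Q \<Longrightarrow> degree f \<le> degree g"
    and P: "s_radically_finite s (const_part Q)"
    and Qa: "s_radically_finite [:s:] (plus_principal Q [:lead_coeff f:])"
  shows "s_radically_finite [:s:] Q"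
proof -
  let ?a = "[:lead_coeff f:]"
  obtain G where G: "finite G" "G \<subseteq> const_part Q" "(\<lambda>x. s * x) ` const_part Q \<subseteq> radical (ideal_gen G)"
    using P by (rule s_radically_finiteE)
  obtain H where H: "finite H" "H \<subseteq> plus_principal Q ?a"
    "(\<lambda>x. [:s:] * x) ` plus_principal Q ?a \<subseteq> radical (ideal_gen H)"
    using Qa by (rule s_radically_finiteE)
  obtain F where F: "finite F" "F \<subseteq> Q" "ideal_gen H \<subseteq> plus_principal (ideal_gen F) ?a"
    using finite_generators_plus_principal[OF H(1,2)] by blast
  define Gens where "Gens = insert f ((\<lambda>c. [:c:]) ` G) \<union> F"
  let ?J = "ideal_gen Gens"
  have J: "is_ideal ?J" by (rule is_ideal_ideal_gen)
  have gens: "Gens \<subseteq> ?J" by (rule ideal_gen_subset)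
  have sub: "ideal_gen F \<subseteq> ?J" "ideal_gen (insert f ((\<lambda>c. [:c:]) ` G)) \<subseteq> ?J"
    by (rule ideal_gen_minimal[OF J], use gens in \<open>simp add: Gens_def\<close>)+
  show ?thesis
  proof (rule s_radically_finiteI[OF Q])
    show "finite Gens" unfolding Gens_def using G(1) F(1) by simp
    show "Gens \<subseteq> Q" unfolding Gens_def using G(2) f(1) F(2) by (auto simp: const_part_def)
    show "(\<lambda>x. [:s:] * x) ` Q \<subseteq> radical ?J"
    proof (rule image_subsetI)
      fix h assume h: "h \<in> Q"
      then have "h \<in> plus_principal Q ?a" by (rule subsetD[OF subset_plus_principal])
      then have "[:s:] * h \<in> radical (ideal_gen H)" using H(3) by blast
      then obtain m where "([:s:] * h) ^ m \<in> ideal_gen H" unfolding radical_def by blast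
      then have "([:s:] * h) ^ m \<in> plus_principal ?J ?a" using F(3) plus_principal_mono[OF sub(1)] by blast
      moreover obtain k where "?a ^ k * ([:s:] * h) \<in> radical ?J"
        using power_lead_coeff_mult_mem_radical[OF Q f min G(3) h] radical_mono[OF sub(2)] by blast
      ultimately show "[:s:] * h \<in> radical ?J" by (rule radical_plus_principal_cancel[OF J])
    qed
  qed
qed

lemma s_radically_finite_poly_if_maximal:
  fixes Q :: "'a::comm_ring_1 poly set"
  assumes Q: "is_ideal Q" and P: "s_radically_finite s (const_part Q)"
    and larger: "\<And>Q'. is_ideal Q' \<Longrightarrow> Q \<subset> Q' \<Longrightarrow> s_radically_finite [:s:] Q'"
  shows "s_radically_finite [:s:] Q"
proof (cases "\<forall>g\<in>Q. [:lead_coeff g:] \<in> Q")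
  case True
  then have "\<And>g. g \<in> Q \<Longrightarrow> [:lead_coeff g:] \<in> Q" by blast
  then show ?thesis by (rule s_radically_finite_poly_if_lead_coeffs_mem[OF Q _ P])
next
  case False
  then obtain g where "g \<in> Q \<and> [:lead_coeff g:] \<notin> Q" by blast
  then have "\<exists>f. (f \<in> Q \<and> [:lead_coeff f:] \<notin> Q) \<and>
      (\<forall>g. g \<in> Q \<and> [:lead_coeff g:] \<notin> Q \<longrightarrow> degree f \<le> degree g)"
    by (rule ex_has_least_nat)
  then obtain f where f: "f \<in> Q" "[:lead_coeff f:] \<notin> Q"
    and min: "\<And>g. g \<in> Q \<Longrightarrow> [:lead_coeff g:] \<notin> Q \<Longrightarrow> degree f \<le> degree g"
    by blast
  have "Q \<subseteq> plus_principal Q [:lead_coeff f:]" by (rule subset_plus_principal)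
  moreover have "[:lead_coeff f:] \<in> plus_principal Q [:lead_coeff f:]"
    by (rule principal_mem_plus_principal[OF Q])
  ultimately have "Q \<subset> plus_principal Q [:lead_coeff f:]" using f(2) by blast
  then have "s_radically_finite [:s:] (plus_principal Q [:lead_coeff f:])"
    by (rule larger[OF is_ideal_plus_principal[OF Q]])
  then show ?thesis using s_radically_finite_poly_if_min_lead_coeff[OF Q f min P] by blast
qed

lemma s_radically_finite_of_poly_extension:
  assumes I: "is_ideal I" and "s_radically_finite [:s:] (poly_extension I)"
  shows "s_radically_finite s I"
proof -
  obtain F where F: "finite F" "F \<subseteq> poly_extension I"
    "(\<lambda>p. [:s:] * p) ` poly_extension I \<subseteq> radical (ideal_gen F)"
    using assms(2) by (rule s_radically_finiteE)
  show ?thesis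
  proof (rule s_radically_finiteI[OF I])
    show "finite ((\<lambda>p. coeff p 0) ` F)" using F(1) by simp
    show "(\<lambda>p. coeff p 0) ` F \<subseteq> I" using F(2) unfolding poly_extension_def by blast
    show "(\<lambda>x. s * x) ` I \<subseteq> radical (ideal_gen ((\<lambda>p. coeff p 0) ` F))"
    proof (rule image_subsetI)
      fix x assume "x \<in> I"
      then have "[:x:] \<in> poly_extension I"
        using ideal_zero[OF I] by (auto simp: poly_extension_def coeff_pCons split: nat.split)
      then have "[:s:] * [:x:] \<in> radical (ideal_gen F)" using F(3) by blast
      then have "coeff ([:s:] * [:x:]) 0 \<in> radical (ideal_gen ((\<lambda>p. coeff p 0) ` F))"
        by (rule coeff_0_mem_radical_ideal_gen)
      then show "s * x \<in> radical (ideal_gen ((\<lambda>p. coeff p 0) ` F))" by (simp add: mult.commute)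
    qed
  qed
qed

lemma u_S_noetherian_spectrum_poly:
  assumes "u_S_noetherian_spectrum S"
  shows "u_S_noetherian_spectrum ((\<lambda>s. [:s:]) ` S)"
proof -
  obtain s where s: "s \<in> S" "\<And>I. is_ideal I \<Longrightarrow> s_radically_finite s I"
    using assms unfolding u_S_noetherian_spectrum_iff by blast
  have "s_radically_finite [:s:] Q" if "is_ideal Q" for Q
    using that
  proof (rule s_radically_finite_Zorn_induct[rotated])
    fix Q' assume Q': "is_ideal Q'"
      and larger: "\<And>Q''. is_ideal Q'' \<Longrightarrow> Q' \<subset> Q'' \<Longrightarrow> s_radically_finite [:s:] Q''"
    show "s_radically_finite [:s:] Q'"
      by (rule s_radically_finite_poly_if_maximal[OF Q' s(2)[OF is_ideal_const_part[OF Q']] larger])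
  qed
  then show ?thesis using s(1) unfolding u_S_noetherian_spectrum_iff by blast
qed

lemma u_S_noetherian_spectrum_of_poly:
  assumes "u_S_noetherian_spectrum ((\<lambda>s. [:s:]) ` S)"
  shows "u_S_noetherian_spectrum S"
proof -
  obtain s where "s \<in> S" and s: "\<And>Q. is_ideal Q \<Longrightarrow> s_radically_finite [:s:] Q"
    using assms unfolding u_S_noetherian_spectrum_iff by blast
  have "s_radically_finite s I" if "is_ideal I" for I
    using that s[OF is_ideal_poly_extension[OF that]] by (rule s_radically_finite_of_poly_extension)
  then show ?thesis using \<open>s \<in> S\<close> unfolding u_S_noetherian_spectrum_iff by blast
qed

theorem theorem4p3:
  fixes S :: "'a::comm_ring_1 set"
  assumes "mult_subset S"
  shows "u_S_noetherian_spectrum S \<longleftrightarrow> u_S_noetherian_spectrum ((\<lambda>s. [:s:]) ` S)"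
  using u_S_noetherian_spectrum_poly u_S_noetherian_spectrum_of_poly by blast

end
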